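(* Under the exploration assumption in the context, for any policy $\pi$ with $\pi_{\min}:=\min_{s,a}\pi(a\mid s)>0$, the pair \[ \bar C_\pi=\Big(1-\tfrac12\delta_b\pi_{\min}^{r_b+1}\mu_{\pi_b,\min}\pi_{b,\min}\Big)^{-1},\qquad\bar\rho_\pi=\Big(1-\tfrac12\delta_b\pi_{\min}^{r_b+1}\mu_{\pi_b,\min}\pi_{b,\min}\Big)^{1/(r_b+1)} \] are valid mixing parameters of the lazy transition matrix $\bar{\mathcal P}_\pi$, i.e. $\max_{(s,a)}\|\bar{\mathcal P}_\pi^k((s,a),\cdot)-\bar\mu_\pi\|_{\mathrm{TV}}\le\bar C_\pi\bar\rho_\pi^k$ for all $k\ge0$.
   Context: Finite MDP: states $\mathcal S$, actions $\mathcal A$, kernel $p(s'\mid s,a)$. Exploration assumption: a policy $\pi_b$ with $\pi_b(a\mid s)>0$ for all $(s,a)$ induces an irreducible state chain $P_{\pi_b}(s,s')=\sum_ap(s'\mid s,a)\pi_b(a\mid s)$; $\pi_{b,\min}=\min_{s,a}\pi_b(a\mid s)$; $\mu_{\pi_b}$ its stationary distribution and $\mu_{\pi_b,\min}=\min_s\mu_{\pi_b}(s)$; $\mathcal P_{\pi_b}=(P_{\pi_b}+I)/2$; $r_b\in\mathbb Z_+$ and $\delta_b>0$ satisfy $\min_{s,s'}\mathcal P_{\pi_b}^{r_b}(s,s')\ge\delta_b$. For a policy $\pi$ with positive entries, $\bar P_\pi((s,a),(s',a'))=p(s'\mid s,a)\pi(a'\mid s')$ is the state-action transition matrix, $\bar{\mathcal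 P}_\pi=(\bar P_\pi+I)/2$ its lazy version, and $\bar\mu_\pi(s,a)=\mu_\pi(s)\pi(a\mid s)$ its stationary distribution, with $\mu_\pi$ the stationary distribution of the state chain $P_\pi$. $\|\cdot\|_{\mathrm{TV}}$ is the total variation distance. *)

theory Defs
  imports Complex_Main
begin

definition mmult :: "('i::finite \<Rightarrow> 'i \<Rightarrow> real) \<Rightarrow> ('i \<Rightarrow> 'i \<Rightarrow> real) \<Rightarrow> 'i \<Rightarrow> 'i \<Rightarrow> real" where
  "mmult A B i j = (\<Sum>k\<in>UNIV. A i k * B k j)"

definition mid :: "'i \<Rightarrow> 'i \<Rightarrow> real" where
  "mid i j = (if i = j then 1 else 0)"

fun mpow :: "('i::finite \<Rightarrow> 'i \<Rightarrow> real) \<Rightarrow> nat \<Rightarrow> 'i \<Rightarrow> 'i \<Rightarrow> real" where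
  "mpow A 0 = mid"
| "mpow A (Suc n) = mmult (mpow A n) A"

definition lazy :: "('i \<Rightarrow> 'i \<Rightarrow> real) \<Rightarrow> 'i \<Rightarrow> 'i \<Rightarrow> real" where
  "lazy A i j = (A i j + mid i j) / 2"

definition irreducible_chain :: "('i::finite \<Rightarrow> 'i \<Rightarrow> real) \<Rightarrow> bool" where
  "irreducible_chain A \<longleftrightarrow> (\<forall>i j. \<exists>n. mpow A n i j > 0)"

definition is_distribution :: "('i::finite \<Rightarrow> real) \<Rightarrow> bool" where
  "is_distribution d \<longleftrightarrow> (\<forall>i. d i \<ge> 0) \<and> (\<Sum>i\<in>UNIV. d i) = 1"

definition stationary :: "('i::finite \<Rightarrow> 'i \<Rightarrow> real) \<Rightarrow> ('i \<Rightarrow> real) \<Rightarrow> bool" where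
  "stationary A d \<longleftrightarrow> is_distribution d \<and> (\<forall>j. (\<Sum>i\<in>UNIV. d i * A i j) = d j)"

definition tv_dist :: "('i::finite \<Rightarrow> real) \<Rightarrow> ('i \<Rightarrow> real) \<Rightarrow> real" where
  "tv_dist d e = (\<Sum>i\<in>UNIV. \<bar>d i - e i\<bar>) / 2"

text \<open>MDP: kernel p s a s' = p(s'|s,a); policy pol s a = pol(a|s).\<close>

definition is_kernel :: "('s::finite \<Rightarrow> 'a::finite \<Rightarrow> 's \<Rightarrow> real) \<Rightarrow> bool" where
  "is_kernel p \<longleftrightarrow> (\<forall>s a. is_distribution (p s a))"

definition is_policy :: "('s::finite \<Rightarrow> 'a::finite \<Rightarrow> real) \<Rightarrow> bool" where
  "is_policy pol \<longleftrightarrow> (\<forall>s. is_distribution (pol s))"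

definition state_chain :: "('s::finite \<Rightarrow> 'a::finite \<Rightarrow> 's \<Rightarrow> real) \<Rightarrow> ('s \<Rightarrow> 'a \<Rightarrow> real) \<Rightarrow> 's \<Rightarrow> 's \<Rightarrow> real" where
  "state_chain p pol s s' = (\<Sum>a\<in>UNIV. p s a s' * pol s a)"

definition sa_chain :: "('s \<Rightarrow> 'a \<Rightarrow> 's \<Rightarrow> real) \<Rightarrow> ('s \<Rightarrow> 'a \<Rightarrow> real) \<Rightarrow> ('s \<times> 'a) \<Rightarrow> ('s \<times> 'a) \<Rightarrow> real" where
  "sa_chain p pol x y = p (fst x) (snd x) (fst y) * pol (fst y) (snd y)"

definition pol_min :: "('s::finite \<Rightarrow> 'a::finite \<Rightarrow> real) \<Rightarrow> real" where
  "pol_min pol = Min {pol s a |s a. True}"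

end

theory Submission
  imports Defs
begin

text \<open>
  One step of the lazy state-action chain dominates half a kernel step followed by an action
  drawn from \<open>pol\<close>, and the lazy state chain under \<open>pol\<close> dominates \<open>pol_min pol ^ rb\<close>
  times the lazy behaviour chain. Hence every entry of the \<open>(rb + 1)\<close>-step matrix of the lazy
  state-action chain is at least \<open>\<theta> = deltab * pol_min pol ^ (rb + 1) / 2\<close>, and Doeblin's
  argument contracts the total variation distance by \<open>1 - \<theta>\<close> per block of \<open>rb + 1\<close> steps.
\<close>

definition vmult :: "('i::finite \<Rightarrow> real) \<Rightarrow> ('i \<Rightarrow> 'i \<Rightarrow> real) \<Rightarrow> 'i \<Rightarrow> real" where
  "vmult u A j = (\<Sum>i\<in>UNIV. u i * A i j)"

definition stochastic :: "('i::finite \<Rightarrow> 'i \<Rightarrow> real) \<Rightarrow> bool" where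
  "stochastic A \<longleftrightarrow> (\<forall>i. is_distribution (A i))"

definition sa_dist :: "('s \<Rightarrow> real) \<Rightarrow> ('s \<Rightarrow> 'a \<Rightarrow> real) \<Rightarrow> 's \<times> 'a \<Rightarrow> real" where
  "sa_dist \<nu> pol = (\<lambda>(s, a). \<nu> s * pol s a)"

lemma sa_dist_apply: "sa_dist \<nu> pol x = \<nu> (fst x) * pol (fst x) (snd x)"
  by (simp add: sa_dist_def split_beta)

lemma mmult_row: "mmult A B i = vmult (A i) B"
  by (auto simp: mmult_def vmult_def)

lemma vmult_mmult: "vmult u (mmult A B) = vmult (vmult u A) B"
proof
  fix j
  have "vmult u (mmult A B) j = (\<Sum>i\<in>UNIV. \<Sum>k\<in>UNIV. u i * (A i k * B k j))"
    by (simp add: vmult_def mmult_def sum_distrib_left)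
  also have "\<dots> = (\<Sum>k\<in>UNIV. \<Sum>i\<in>UNIV. u i * A i k * B k j)"
    by (subst sum.swap) (simp add: mult.assoc)
  also have "\<dots> = vmult (vmult u A) B j"
    by (simp add: vmult_def sum_distrib_right)
  finally show "vmult u (mmult A B) j = vmult (vmult u A) B j" .
qed

lemma mmult_assoc: "mmult (mmult A B) C = mmult A (mmult B C)"
  by (rule ext) (simp add: mmult_row vmult_mmult)

lemma vmult_mid: "vmult u mid = u"
  by (rule ext) (simp add: vmult_def mid_def if_distrib[of "\<lambda>x. _ * x"] cong: if_cong)

lemma vmult_mid_row: "vmult (mid i) A = A i"
  by (rule ext) (simp add: vmult_def mid_def if_distrib[of "\<lambda>x. x * _"] cong: if_cong)

lemma mmult_mid_right: "mmult A mid = A"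
  by (rule ext) (simp add: mmult_row vmult_mid)

lemma mmult_mid_left: "mmult mid A = A"
  by (rule ext) (simp add: mmult_row vmult_mid_row)

lemma mpow_add: "mpow A (m + n) = mmult (mpow A m) (mpow A n)"
  by (induction n) (simp_all add: mmult_mid_right mmult_assoc)

lemma mpow_mult: "mpow A (m * n) = mpow (mpow A m) n"
proof (induction n)
  case (Suc n)
  have "mpow A (m * Suc n) = mpow A (m * n + m)" by (simp add: add.commute)
  with Suc show ?case by (simp only: mpow_add mpow.simps)
qed simp

lemma mpow_Suc_left: "mpow A (Suc n) = mmult A (mpow A n)"
  using mpow_add[of A 1 n] by (simp add: mmult_mid_left)

lemma vmult_mpow_Suc: "vmult u (mpow A (Suc n)) = vmult (vmult u (mpow A n)) A"
  by (simp add: vmult_mmult)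

lemma vmult_lazy: "vmult u (lazy A) j = (vmult u A j + u j) / 2"
proof -
  have "vmult u (lazy A) j = (vmult u A j + vmult u mid j) / 2"
    unfolding vmult_def lazy_def
    by (simp add: sum_divide_distrib[symmetric] sum.distrib algebra_simps)
  thus ?thesis by (simp add: vmult_mid)
qed

lemma mpow_nonneg: "\<forall>i j. 0 \<le> A i j \<Longrightarrow> 0 \<le> mpow A n i j"
  by (induction n arbitrary: i j) (auto simp: mid_def mmult_def intro!: sum_nonneg)

lemma mpow_scaled_le:
  assumes le: "\<forall>i j. c * B i j \<le> A i j" and B: "\<forall>i j. 0 \<le> B i j" and c: "0 \<le> c"
  shows "c ^ n * mpow B n i j \<le> mpow A n i j"
proof (induction n arbitrary: i j)
  case 0 show ?case by (simp add: mid_def)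
next
  case (Suc n)
  have "c ^ Suc n * mpow B (Suc n) i j = (\<Sum>k\<in>UNIV. (c ^ n * mpow B n i k) * (c * B k j))"
    by (simp add: mmult_def sum_distrib_left algebra_simps)
  also have "\<dots> \<le> (\<Sum>k\<in>UNIV. mpow A n i k * A k j)"
  proof (intro sum_mono mult_mono)
    fix k
    show "c ^ n * mpow B n i k \<le> mpow A n i k" using Suc .
    show "c * B k j \<le> A k j" using le by simp
    show "0 \<le> mpow A n i k"
      using Suc[of i k] mpow_nonneg[OF B, of n i k] c by (meson order_trans zero_le_mult_iff zero_le_power)
    show "0 \<le> c * B k j" using B c by simp
  qed
  finally show ?case by (simp add: mmult_def)
qed

lemma is_distribution_le_1: "is_distribution u \<Longrightarrow> u i \<le> 1"
  unfolding is_distribution_def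
  by (metis finite_UNIV member_le_sum UNIV_I)

lemma is_distribution_mid: "is_distribution (mid i)"
  by (simp add: is_distribution_def mid_def)

lemma is_distribution_vmult:
  assumes "is_distribution u" "stochastic A"
  shows "is_distribution (vmult u A)"
proof -
  have "(\<Sum>j\<in>UNIV. vmult u A j) = (\<Sum>i\<in>UNIV. u i * (\<Sum>j\<in>UNIV. A i j))"
    unfolding vmult_def by (subst sum.swap) (simp add: sum_distrib_left)
  also have "\<dots> = 1" using assms by (simp add: stochastic_def is_distribution_def)
  finally show ?thesis using assms
    by (auto simp: is_distribution_def stochastic_def vmult_def intro!: sum_nonneg)
qed

lemma vmult_ge:
  assumes "is_distribution u" "\<forall>i. c \<le> A i j"
  shows "c \<le> vmult u A j"
proof -
  have "(\<Sum>i\<in>UNIV. u i * c) \<le> vmult u A j"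
    unfolding vmult_def using assms by (intro sum_mono mult_left_mono) (auto simp: is_distribution_def)
  thus ?thesis using assms by (simp add: sum_distrib_right[symmetric] is_distribution_def)
qed

lemma stochastic_mid: "stochastic mid"
  by (simp add: stochastic_def is_distribution_mid)

lemma stochastic_mmult: "stochastic A \<Longrightarrow> stochastic B \<Longrightarrow> stochastic (mmult A B)"
  by (simp add: stochastic_def mmult_row is_distribution_vmult)

lemma stochastic_mpow: "stochastic A \<Longrightarrow> stochastic (mpow A n)"
  by (induction n) (simp_all add: stochastic_mid stochastic_mmult)

lemma stochastic_lazy: "stochastic A \<Longrightarrow> stochastic (lazy A)"
  unfolding stochastic_def is_distribution_def lazy_def
  by (auto simp: sum_divide_distrib[symmetric] sum.distrib mid_def)

lemma stochastic_nonneg: "stochastic A \<Longrightarrow> 0 \<le> A i j"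
  by (simp add: stochastic_def is_distribution_def)

lemma stochastic_le_1: "stochastic A \<Longrightarrow> A i j \<le> 1"
  by (simp add: stochastic_def is_distribution_le_1)

lemma stationary_iff_vmult: "stationary A d \<longleftrightarrow> is_distribution d \<and> vmult d A = d"
  by (auto simp: stationary_def vmult_def fun_eq_iff)

lemma stationary_mpow: "stationary A d \<Longrightarrow> vmult d (mpow A n) = d"
  by (induction n) (simp_all add: vmult_mid vmult_mmult stationary_iff_vmult)

lemma tv_dist_le_1:
  assumes "is_distribution u" "is_distribution v"
  shows "tv_dist u v \<le> 1"
proof -
  have "(\<Sum>i\<in>UNIV. \<bar>u i - v i\<bar>) \<le> (\<Sum>i\<in>UNIV. u i + v i)"
    using assms by (intro sum_mono) (auto simp: is_distribution_def abs_le_iff)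
  also have "\<dots> = 2" using assms by (simp add: sum.distrib is_distribution_def)
  finally show ?thesis by (simp add: tv_dist_def)
qed

text \<open>
  Doeblin's contraction: since the entries of \<open>u - v\<close> sum to zero, \<open>(u - v) M = (u - v) (M - c)\<close>,
  and the rows of the nonnegative matrix \<open>M - c\<close> sum to at most \<open>1 - c\<close>.
\<close>

lemma tv_dist_vmult_le:
  fixes u v :: "'i::finite \<Rightarrow> real"
  assumes M: "stochastic M" and c: "\<forall>i j. c \<le> M i j" "0 \<le> c"
    and u: "is_distribution u" and v: "is_distribution v"
  shows "tv_dist (vmult u M) (vmult v M) \<le> (1 - c) * tv_dist u v"
proof -
  have card: "1 \<le> real (card (UNIV :: 'i set))"
    using finite_UNIV_card_ge_0[where 'a='i] by simp
  have sum_diff: "(\<Sum>i\<in>UNIV. u i - v i) = 0"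
    using u v by (simp add: sum_subtractf is_distribution_def)
  have "\<bar>vmult u M j - vmult v M j\<bar> \<le> (\<Sum>i\<in>UNIV. \<bar>u i - v i\<bar> * (M i j - c))" for j
  proof -
    have "vmult u M j - vmult v M j = (\<Sum>i\<in>UNIV. (u i - v i) * M i j)"
      by (simp add: vmult_def sum_subtractf left_diff_distrib)
    also have "\<dots> = (\<Sum>i\<in>UNIV. (u i - v i) * (M i j - c)) + (\<Sum>i\<in>UNIV. u i - v i) * c"
      unfolding sum_distrib_right sum.distrib[symmetric] by (intro sum.cong) (auto simp: algebra_simps)
    also have "\<dots> = (\<Sum>i\<in>UNIV. (u i - v i) * (M i j - c))" using sum_diff by simp
    finally have "\<bar>vmult u M j - vmult v M j\<bar> = \<bar>\<Sum>i\<in>UNIV. (u i - v i) * (M i j - c)\<bar>" by simp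
    also have "\<dots> \<le> (\<Sum>i\<in>UNIV. \<bar>(u i - v i) * (M i j - c)\<bar>)" by (rule sum_abs)
    also have "\<dots> = (\<Sum>i\<in>UNIV. \<bar>u i - v i\<bar> * (M i j - c))"
      using c by (intro sum.cong) (auto simp: abs_mult)
    finally show ?thesis .
  qed
  hence "(\<Sum>j\<in>UNIV. \<bar>vmult u M j - vmult v M j\<bar>)
      \<le> (\<Sum>j\<in>UNIV. \<Sum>i\<in>UNIV. \<bar>u i - v i\<bar> * (M i j - c))"
    by (intro sum_mono)
  also have "\<dots> = (\<Sum>i\<in>UNIV. \<bar>u i - v i\<bar> * (1 - real (card (UNIV :: 'i set)) * c))"
    using M by (subst sum.swap) (simp add: sum_distrib_left[symmetric] sum_subtractf stochastic_def is_distribution_def)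
  also have "\<dots> \<le> (\<Sum>i\<in>UNIV. \<bar>u i - v i\<bar> * (1 - c))"
    using card c mult_right_mono[OF card c(2)] by (intro sum_mono mult_left_mono) auto
  also have "\<dots> = (1 - c) * (\<Sum>i\<in>UNIV. \<bar>u i - v i\<bar>)"
    by (simp add: sum_distrib_left mult.commute)
  finally show ?thesis by (simp add: tv_dist_def)
qed

lemma tv_dist_vmult_mpow_le:
  assumes M: "stochastic M" and c: "\<forall>i j. c \<le> M i j" "0 \<le> c"
    and u: "is_distribution u" and v: "is_distribution v"
  shows "tv_dist (vmult u (mpow M n)) (vmult v (mpow M n)) \<le> (1 - c) ^ n * tv_dist u v"
proof (induction n)
  case 0 show ?case by (simp add: vmult_mid)
next
  case (Suc n)
  have "0 \<le> 1 - c"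
    using c(1) stochastic_le_1[OF M] by (meson diff_ge_0_iff_ge order_trans)
  have "tv_dist (vmult u (mpow M (Suc n))) (vmult v (mpow M (Suc n)))
      \<le> (1 - c) * tv_dist (vmult u (mpow M n)) (vmult v (mpow M n))"
    unfolding vmult_mpow_Suc using M c u v
    by (intro tv_dist_vmult_le is_distribution_vmult stochastic_mpow)
  also have "\<dots> \<le> (1 - c) * ((1 - c) ^ n * tv_dist u v)"
    using Suc \<open>0 \<le> 1 - c\<close> by (rule mult_left_mono)
  finally show ?case by simp
qed

lemma tv_dist_vmult_mpow_nonexpansive:
  assumes "stochastic M" "is_distribution u" "is_distribution v"
  shows "tv_dist (vmult u (mpow M n)) (vmult v (mpow M n)) \<le> tv_dist u v"
  using tv_dist_vmult_mpow_le[of M 0 u v n] assms by (simp add: stochastic_nonneg)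

lemma tv_dist_mpow_stationary_le:
  assumes L: "stochastic L" and c: "\<forall>i j. c \<le> mpow L n i j" "0 \<le> c"
    and mu: "stationary L \<mu>"
  shows "tv_dist (mpow L k i) \<mu> \<le> (1 - c) ^ (k div n)"
proof -
  define q r where "q = k div n" and "r = k mod n"
  define N where "N = mpow L n"
  have N: "stochastic N" unfolding N_def using L by (rule stochastic_mpow)
  have mu_dist: "is_distribution \<mu>" using mu by (simp add: stationary_def)
  have "mpow L k = mmult (mpow N q) (mpow L r)"
    unfolding N_def q_def r_def by (metis mpow_add mpow_mult div_mult_mod_eq mult.commute)
  hence "tv_dist (mpow L k i) \<mu>
      = tv_dist (vmult (vmult (mid i) (mpow N q)) (mpow L r)) (vmult (vmult \<mu> (mpow N q)) (mpow L r))"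
    using stationary_mpow[OF mu] by (simp add: N_def mpow_mult[symmetric] mmult_row vmult_mmult vmult_mid_row)
  also have "\<dots> \<le> tv_dist (vmult (mid i) (mpow N q)) (vmult \<mu> (mpow N q))"
    by (intro tv_dist_vmult_mpow_nonexpansive L is_distribution_vmult stochastic_mpow N
        is_distribution_mid mu_dist)
  also have "\<dots> \<le> (1 - c) ^ q * tv_dist (mid i) \<mu>"
    using N c by (simp add: N_def tv_dist_vmult_mpow_le is_distribution_mid mu_dist)
  also have "\<dots> \<le> (1 - c) ^ q"
  proof (rule mult_left_le)
    show "tv_dist (mid i) \<mu> \<le> 1" by (rule tv_dist_le_1[OF is_distribution_mid mu_dist])
    show "0 \<le> (1 - c) ^ q"
    proof -
      have "c \<le> 1" using c(1) stochastic_le_1[OF N, of i i] unfolding N_def by (meson order_trans)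
      thus ?thesis by simp
    qed
  qed
  finally show ?thesis by (simp add: q_def)
qed

lemma power_div_le_powr:
  fixes b :: real
  assumes "0 < b" "b \<le> 1" "0 < n"
  shows "b ^ (k div n) \<le> (1 / b) * (b powr (1 / real n)) ^ k"
proof -
  have "k < (k div n + 1) * n"
    using div_mult_mod_eq[of k n] mod_less_divisor[OF assms(3), of k] by (simp only: distrib_right)
  hence "real k \<le> real (k div n + 1) * real n"
    by (metis less_imp_le of_nat_le_iff of_nat_mult)
  hence "real k / real n \<le> real (k div n + 1)"
    using assms(3) by (simp add: divide_le_eq)
  have "b ^ (k div n + 1) = b powr real (k div n + 1)"
    using assms by (simp only: powr_realpow)
  also have "\<dots> \<le> b powr (real k / real n)"
    using assms \<open>real k / real n \<le> real (k div n + 1)\<close> by (intro powr_mono') auto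
  also have "\<dots> = (b powr (1 / real n)) ^ k"
    using assms by (simp add: powr_power)
  finally show ?thesis using assms by (simp add: field_simps)
qed

lemma pol_min_eq_Min_range: "pol_min pol = Min (range (\<lambda>x. pol (fst x) (snd x)))"
  unfolding pol_min_def by (rule arg_cong[where f = Min]) (auto simp: image_def)

lemma pol_min_le: "pol_min (pol :: 's::finite \<Rightarrow> 'a::finite \<Rightarrow> real) \<le> pol s a"
  unfolding pol_min_eq_Min_range by (rule Min_le) (auto intro: rev_image_eqI[of "(s, a)"])

lemma pol_min_attained: "\<exists>s a. pol_min (pol :: 's::finite \<Rightarrow> 'a::finite \<Rightarrow> real) = pol s a"
proof -
  have "pol_min pol \<in> range (\<lambda>x. pol (fst x) (snd x))"
    unfolding pol_min_eq_Min_range by (rule Min_in) auto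
  thus ?thesis by auto
qed

lemma pol_min_bounds:
  assumes "is_policy pol" shows "0 \<le> pol_min pol \<and> pol_min pol \<le> 1"
proof -
  obtain s a where "pol_min pol = pol s a" using pol_min_attained by blast
  moreover have "is_distribution (pol s)" using assms by (simp add: is_policy_def)
  ultimately show ?thesis using is_distribution_le_1 by (auto simp: is_distribution_def)
qed

lemma Min_range_distribution_bounds:
  assumes "is_distribution d" shows "0 \<le> Min (range d) \<and> Min (range d) \<le> 1"
proof -
  have "Min (range d) \<in> range d" by (rule Min_in) auto
  then obtain i where "Min (range d) = d i" by (blast elim: rangeE)
  thus ?thesis using assms is_distribution_le_1 by (auto simp: is_distribution_def)
qed

lemma stochastic_state_chain: "is_kernel p \<Longrightarrow> is_policy pol \<Longrightarrow> stochastic (state_chain p pol)"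
  unfolding stochastic_def is_distribution_def state_chain_def is_kernel_def is_policy_def
  by (auto intro!: sum_nonneg simp: sum.swap[of _ UNIV] sum_distrib_right[symmetric])

lemma sum_UNIV_prod:
  "(\<Sum>x\<in>(UNIV::('s::finite \<times> 'a::finite) set). f x) = (\<Sum>s\<in>UNIV. \<Sum>a\<in>UNIV. f (s, a))"
  by (subst UNIV_Times_UNIV[symmetric], subst sum.cartesian_product) simp

lemma is_distribution_sa_dist:
  assumes "is_distribution \<nu>" "is_policy pol"
  shows "is_distribution (sa_dist \<nu> pol)"
proof -
  have "(\<Sum>x\<in>UNIV. sa_dist \<nu> pol x) = (\<Sum>s\<in>UNIV. \<nu> s * (\<Sum>a\<in>UNIV. pol s a))"
    by (subst sum_UNIV_prod) (simp add: sa_dist_apply sum_distrib_left)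
  also have "\<dots> = 1" using assms by (simp add: is_policy_def is_distribution_def)
  finally show ?thesis using assms
    by (auto simp: is_distribution_def is_policy_def sa_dist_apply)
qed

lemma sa_chain_row: "sa_chain p pol x = sa_dist (p (fst x) (snd x)) pol"
  by (simp add: fun_eq_iff sa_chain_def sa_dist_apply)

lemma stochastic_sa_chain: "is_kernel p \<Longrightarrow> is_policy pol \<Longrightarrow> stochastic (sa_chain p pol)"
  by (simp add: stochastic_def sa_chain_row is_distribution_sa_dist is_kernel_def)

lemma vmult_sa_dist_sa_chain:
  "vmult (sa_dist \<nu> pol) (sa_chain p pol) = sa_dist (vmult \<nu> (state_chain p pol)) pol"
proof
  fix y
  have "vmult (sa_dist \<nu> pol) (sa_chain p pol) y
     = (\<Sum>s\<in>UNIV. \<Sum>a\<in>UNIV. \<nu> s * pol s a * (p s a (fst y) * pol (fst y) (snd y)))"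
    unfolding vmult_def sa_chain_def by (subst sum_UNIV_prod) (simp add: sa_dist_apply)
  also have "\<dots> = (\<Sum>s\<in>UNIV. \<nu> s * (\<Sum>a\<in>UNIV. p s a (fst y) * pol s a)) * pol (fst y) (snd y)"
    by (simp add: sum_distrib_left sum_distrib_right algebra_simps)
  finally show "vmult (sa_dist \<nu> pol) (sa_chain p pol) y = sa_dist (vmult \<nu> (state_chain p pol)) pol y"
    by (simp add: vmult_def state_chain_def sa_dist_apply)
qed

lemma vmult_sa_dist_lazy_sa_chain:
  "vmult (sa_dist \<nu> pol) (lazy (sa_chain p pol)) = sa_dist (vmult \<nu> (lazy (state_chain p pol))) pol"
  by (rule ext) (simp add: vmult_lazy vmult_sa_dist_sa_chain[unfolded fun_eq_iff] sa_dist_apply add_divide_distrib algebra_simps)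

lemma vmult_sa_dist_mpow_lazy_sa_chain:
  "vmult (sa_dist \<nu> pol) (mpow (lazy (sa_chain p pol)) n)
   = sa_dist (vmult \<nu> (mpow (lazy (state_chain p pol)) n)) pol"
  by (induction n) (simp_all add: vmult_mid vmult_mmult vmult_sa_dist_lazy_sa_chain)

lemma stationary_lazy_sa_chain:
  assumes "stationary (state_chain p pol) \<mu>" "is_policy pol"
  shows "stationary (lazy (sa_chain p pol)) (sa_dist \<mu> pol)"
proof -
  have "vmult \<mu> (state_chain p pol) = \<mu>"
    using assms(1) by (simp add: stationary_iff_vmult)
  hence "vmult \<mu> (lazy (state_chain p pol)) = \<mu>"
    by (simp add: fun_eq_iff vmult_lazy)
  hence "vmult (sa_dist \<mu> pol) (lazy (sa_chain p pol)) = sa_dist \<mu> pol"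
    by (simp add: vmult_sa_dist_lazy_sa_chain)
  thus ?thesis using assms by (simp add: stationary_iff_vmult is_distribution_sa_dist)
qed

lemma mpow_lazy_state_chain_ge:
  assumes p: "is_kernel p" and pib: "is_policy pib" and pol: "is_policy pol"
    and delta: "\<forall>s s'. \<delta> \<le> mpow (lazy (state_chain p pib)) n s s'"
  shows "\<delta> * pol_min pol ^ n \<le> mpow (lazy (state_chain p pol)) n s s'"
proof -
  define m where "m = pol_min pol"
  have m: "0 \<le> m" "m \<le> 1" using pol_min_bounds[OF pol] by (simp_all add: m_def)
  have "m * state_chain p pib i j \<le> state_chain p pol i j" for i j
    unfolding state_chain_def sum_distrib_left
  proof (intro sum_mono)
    fix a
    have "m * pib i a \<le> m"
      using is_distribution_le_1[of "pib i" a] pib m by (simp add: is_policy_def mult_left_le)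
    hence "m * pib i a \<le> pol i a"
      using pol_min_le[of pol i a] by (simp add: m_def)
    moreover have "0 \<le> p i a j" using p by (simp add: is_kernel_def is_distribution_def)
    ultimately show "m * (p i a j * pib i a) \<le> p i a j * pol i a"
      by (metis mult.left_commute mult_left_mono)
  qed
  moreover have "m * mid i j \<le> mid i j" for i j :: 's using m by (simp add: mid_def)
  ultimately have "\<forall>i j. m * lazy (state_chain p pib) i j \<le> lazy (state_chain p pol) i j"
    unfolding lazy_def times_divide_eq_right distrib_left by (intro allI divide_right_mono add_mono) auto
  hence "m ^ n * mpow (lazy (state_chain p pib)) n s s' \<le> mpow (lazy (state_chain p pol)) n s s'"
    using stochastic_lazy[OF stochastic_state_chain[OF p pib]] m
    by (intro mpow_scaled_le) (auto simp: stochastic_def is_distribution_def)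
  moreover have "m ^ n * \<delta> \<le> m ^ n * mpow (lazy (state_chain p pib)) n s s'"
    using delta m by (simp add: mult_left_mono)
  ultimately show ?thesis by (simp add: m_def mult.commute)
qed

lemma mpow_lazy_sa_chain_Suc_ge:
  assumes p: "is_kernel p" and pol: "is_policy pol"
    and c: "\<forall>s s'. c \<le> mpow (lazy (state_chain p pol)) n s s'"
  shows "c * pol_min pol / 2 \<le> mpow (lazy (sa_chain p pol)) (Suc n) x y"
proof -
  let ?L = "lazy (sa_chain p pol)" and ?Ls = "lazy (state_chain p pol)"
  have Ln: "stochastic (mpow ?L n)"
    by (intro stochastic_mpow stochastic_lazy stochastic_sa_chain p pol)
  have Lsn: "stochastic (mpow ?Ls n)"
    by (intro stochastic_mpow stochastic_lazy stochastic_state_chain p pol)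
  have half_step: "sa_chain p pol x z / 2 \<le> ?L x z" for z
    by (simp add: lazy_def mid_def)
  have Ln_nonneg: "0 \<le> mpow ?L n z y" for z
    using Ln unfolding stochastic_def is_distribution_def by blast
  have "vmult (sa_chain p pol x) (mpow ?L n) y / 2
      = (\<Sum>z\<in>UNIV. sa_chain p pol x z / 2 * mpow ?L n z y)"
    by (simp add: vmult_def sum_divide_distrib)
  also have "\<dots> \<le> vmult (?L x) (mpow ?L n) y"
    unfolding vmult_def using half_step Ln_nonneg by (intro sum_mono mult_right_mono)
  also have "\<dots> = mpow ?L (Suc n) x y"
    by (simp only: mpow_Suc_left mmult_row)
  finally have lower: "vmult (p (fst x) (snd x)) (mpow ?Ls n) (fst y) * pol (fst y) (snd y) / 2
      \<le> mpow ?L (Suc n) x y"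
    by (simp add: sa_chain_row vmult_sa_dist_mpow_lazy_sa_chain sa_dist_apply)
  have "c \<le> vmult (p (fst x) (snd x)) (mpow ?Ls n) (fst y)"
    using p c by (intro vmult_ge) (auto simp: is_kernel_def)
  moreover have "0 \<le> vmult (p (fst x) (snd x)) (mpow ?Ls n) (fst y)"
    using is_distribution_vmult[OF _ Lsn, of "p (fst x) (snd x)"] p
    by (auto simp: is_kernel_def is_distribution_def)
  ultimately have "c * pol_min pol \<le> vmult (p (fst x) (snd x)) (mpow ?Ls n) (fst y) * pol (fst y) (snd y)"
    using pol_min_le[of pol "fst y" "snd y"] pol_min_bounds[OF pol] by (intro mult_mono) auto
  with lower show ?thesis by linarith
qed

theorem lemma8:
  fixes p :: "'s::finite \<Rightarrow> 'a::finite \<Rightarrow> 's \<Rightarrow> real"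
    and pib pol :: "'s \<Rightarrow> 'a \<Rightarrow> real"
    and mub mu :: "'s \<Rightarrow> real"
    and rb :: nat and deltab :: real
  assumes kernel: "is_kernel p"
    and pib_pol: "is_policy pib" and pib_pos: "\<forall>s a. pib s a > 0"
    and irred: "irreducible_chain (state_chain p pib)"
    and mub_stat: "stationary (state_chain p pib) mub"
    and deltab_pos: "deltab > 0"
    and doeblin: "\<forall>s s'. mpow (lazy (state_chain p pib)) rb s s' \<ge> deltab"
    and pi_pol: "is_policy pol" and pi_pos: "pol_min pol > 0"
    and mu_stat: "stationary (state_chain p pol) mu"
  shows "\<forall>k::nat. \<forall>x::'s \<times> 'a.
     tv_dist (mpow (lazy (sa_chain p pol)) k x) (\<lambda>(s, a). mu s * pol s a)
     \<le> (1 / (1 - deltab * pol_min pol ^ (rb + 1) * Min (range mub) * pol_min pib / 2))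
       * ((1 - deltab * pol_min pol ^ (rb + 1) * Min (range mub) * pol_min pib / 2)
           powr (1 / real (rb + 1))) ^ k"
proof (intro allI)
  fix k :: nat and x :: "'s \<times> 'a"
  define \<theta> where "\<theta> = deltab * pol_min pol ^ (rb + 1) / 2"
  define \<theta>' where "\<theta>' = deltab * pol_min pol ^ (rb + 1) * Min (range mub) * pol_min pib / 2"
  have "deltab \<le> 1"
    using doeblin stochastic_le_1[OF stochastic_mpow[OF stochastic_lazy[OF stochastic_state_chain[OF kernel pib_pol]]]]
    by (meson order_trans)
  hence \<theta>_le_half: "\<theta> \<le> 1/2"
    using pol_min_bounds[OF pi_pol] deltab_pos by (simp add: \<theta>_def mult_le_one power_le_one)
  have \<theta>'_bounds: "0 \<le> \<theta>' \<and> \<theta>' \<le> \<theta>"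
    using pol_min_bounds[OF pib_pol] Min_range_distribution_bounds[of mub] mub_stat deltab_pos pi_pos
    by (simp add: \<theta>_def \<theta>'_def stationary_def mult_le_one mult_left_le)
  have "\<forall>s s'. deltab * pol_min pol ^ rb \<le> mpow (lazy (state_chain p pol)) rb s s'"
    using mpow_lazy_state_chain_ge[OF kernel pib_pol pi_pol doeblin] by blast
  moreover have "\<theta> = deltab * pol_min pol ^ rb * pol_min pol / 2"
    by (simp add: \<theta>_def)
  ultimately have "\<forall>y z. \<theta> \<le> mpow (lazy (sa_chain p pol)) (Suc rb) y z"
    using mpow_lazy_sa_chain_Suc_ge[OF kernel pi_pol] by presburger
  moreover have "0 \<le> \<theta>"
    using deltab_pos pi_pos by (simp add: \<theta>_def)
  ultimately have "tv_dist (mpow (lazy (sa_chain p pol)) k x) (sa_dist mu pol) \<le> (1 - \<theta>) ^ (k div Suc rb)"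
    by (intro tv_dist_mpow_stationary_le stochastic_lazy stochastic_sa_chain kernel pi_pol
        stationary_lazy_sa_chain mu_stat)
  also have "\<dots> \<le> (1 - \<theta>') ^ (k div Suc rb)"
    using \<theta>_le_half \<theta>'_bounds by (intro power_mono) auto
  also have "\<dots> \<le> (1 / (1 - \<theta>')) * ((1 - \<theta>') powr (1 / real (Suc rb))) ^ k"
    using \<theta>_le_half \<theta>'_bounds by (intro power_div_le_powr) auto
  finally show "tv_dist (mpow (lazy (sa_chain p pol)) k x) (\<lambda>(s, a). mu s * pol s a)
     \<le> (1 / (1 - deltab * pol_min pol ^ (rb + 1) * Min (range mub) * pol_min pib / 2))
       * ((1 - deltab * pol_min pol ^ (rb + 1) * Min (range mub) * pol_min pib / 2)
           powr (1 / real (rb + 1))) ^ k"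
    unfolding sa_dist_def \<theta>'_def by simp
qed

end
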